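(* Let $r, n, q$ be positive integers and $t_1,\dots,t_q$ positive integers. Suppose that for each $i\in[q]$ there exists a collection of $n$ matchings, each of size $t_i$, in an $r$-partite $r$-uniform hypergraph $H_i$ that does not admit a rainbow matching of size $t_i$. Then there exists a collection of $n$ matchings, each of size $\sum_{i=1}^q t_i$, in an $r$-partite $r$-uniform hypergraph $H$ that does not admit a rainbow matching of size $\sum_{i=1}^q t_i-q+1$.
   Context: A hypergraph is $r$-uniform if every edge contains exactly $r$ vertices. An $r$-uniform hypergraph is $r$-partite if its vertex set can be partitioned into $r$ sets $V_1,\dots,V_r$ such that every edge contains exactly one vertex from each $V_i$. A matching is a set of pairwise vertex-disjoint edges. Given a collection (repetitions allowed) of matchings $M_1,\dots,M_n$ in a hypergraph, a matching $M\subseteq \bigcup_{i=1}^n M_i$ is rainbow if there is an injection $\phi:M\to[n]$ such that every edge $e\in M$ belongs to $M_{\phi(e)}$. *)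

theory Defs
  imports Main
begin

definition r_partite_uniform :: "nat \<Rightarrow> 'v set set \<Rightarrow> bool" where
  "r_partite_uniform r H \<longleftrightarrow>
     (\<exists>V :: nat \<Rightarrow> 'v set.
        (\<forall>i<r. \<forall>j<r. i \<noteq> j \<longrightarrow> V i \<inter> V j = {}) \<and>
        (\<forall>e\<in>H. e \<subseteq> (\<Union>i<r. V i) \<and> (\<forall>i<r. card (e \<inter> V i) = 1)))"

definition matching :: "'v set set \<Rightarrow> bool" where
  "matching M \<longleftrightarrow> (\<forall>e\<in>M. \<forall>f\<in>M. e \<noteq> f \<longrightarrow> e \<inter> f = {})"

definition matching_collection :: "'v set set \<Rightarrow> nat \<Rightarrow> (nat \<Rightarrow> 'v set set) \<Rightarrow> nat \<Rightarrow> bool" where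
  "matching_collection H n Ms t \<longleftrightarrow>
     (\<forall>i<n. Ms i \<subseteq> H \<and> matching (Ms i) \<and> finite (Ms i) \<and> card (Ms i) = t)"

definition rainbow_matching :: "nat \<Rightarrow> (nat \<Rightarrow> 'v set set) \<Rightarrow> 'v set set \<Rightarrow> bool" where
  "rainbow_matching n Ms M \<longleftrightarrow>
     matching M \<and> M \<subseteq> (\<Union>i<n. Ms i) \<and>
     (\<exists>\<phi> :: 'v set \<Rightarrow> nat. inj_on \<phi> M \<and> (\<forall>e\<in>M. \<phi> e < n \<and> e \<in> Ms (\<phi> e)))"

definition has_rainbow_matching_of_size :: "nat \<Rightarrow> (nat \<Rightarrow> 'v set set) \<Rightarrow> nat \<Rightarrow> bool" where
  "has_rainbow_matching_of_size n Ms s \<longleftrightarrow>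
     (\<exists>M. rainbow_matching n Ms M \<and> finite M \<and> card M = s)"

end

theory Submission
  imports Defs
begin

text \<open>Take the disjoint union of the hypergraphs \<open>H\<^sub>i\<close>, realised by replacing every
  edge \<open>e\<close> of \<open>H\<^sub>i\<close> by its copy \<open>e \<times> {i}\<close>, and let the \<open>j\<close>-th matching be the union of the
  copies of the \<open>j\<close>-th matchings of all the collections. A rainbow matching of the union
  splits into rainbow matchings of the individual collections, one per copy. If it had
  \<open>\<Sum> t\<^sub>i - q + 1\<close> edges, then by pigeonhole some copy \<open>i\<close> would contain at least \<open>t\<^sub>i\<close>
  of them, giving a rainbow matching of size \<open>t\<^sub>i\<close> for the \<open>i\<close>-th collection.\<close>

definition disjoint_union :: "('i \<Rightarrow> 'v set set) \<Rightarrow> 'i set \<Rightarrow> ('v \<times> 'i) set set" where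
  "disjoint_union H I = (\<Union>i\<in>I. (\<lambda>e. e \<times> {i}) ` H i)"

lemma inj_Times_singleton: "inj (\<lambda>e. e \<times> {i})"
  by (rule injI) (auto simp: times_eq_iff)

lemma r_partite_uniform_edge_nonempty:
  assumes "r_partite_uniform r H" and "r > 0"
  shows "{} \<notin> H"
  using assms unfolding r_partite_uniform_def by force

definition partite_classes :: "nat \<Rightarrow> 'v set set \<Rightarrow> (nat \<Rightarrow> 'v set) \<Rightarrow> bool" where
  "partite_classes r H V \<longleftrightarrow>
     (\<forall>k<r. \<forall>l<r. k \<noteq> l \<longrightarrow> V k \<inter> V l = {}) \<and>
     (\<forall>e\<in>H. e \<subseteq> (\<Union>k<r. V k) \<and> (\<forall>k<r. card (e \<inter> V k) = 1))"

lemma r_partite_uniform_iff_partite_classes: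
  "r_partite_uniform r H \<longleftrightarrow> (\<exists>V. partite_classes r H V)"
  unfolding r_partite_uniform_def partite_classes_def ..

lemma partite_classes_disjoint_union:
  assumes "\<forall>i\<in>I. partite_classes r (H i) (V i)"
  shows "partite_classes r (disjoint_union H I) (\<lambda>k. \<Union>i\<in>I. V i k \<times> {i})"
  unfolding partite_classes_def
proof (intro conjI allI impI ballI)
  fix k l assume "k < r" "l < r" "k \<noteq> l"
  then have "V i k \<inter> V i l = {}" if "i \<in> I" for i
    using assms that unfolding partite_classes_def by simp
  then show "(\<Union>i\<in>I. V i k \<times> {i}) \<inter> (\<Union>i\<in>I. V i l \<times> {i}) = {}"
    by blast
next
  fix e assume "e \<in> disjoint_union H I"
  then obtain i a where i: "i \<in> I" and a: "a \<in> H i" and e: "e = a \<times> {i}"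
    unfolding disjoint_union_def by blast
  have a_classes: "a \<subseteq> (\<Union>k<r. V i k)" "\<forall>k<r. card (a \<inter> V i k) = 1"
    using assms i a unfolding partite_classes_def by simp_all
  then show "e \<subseteq> (\<Union>k<r. \<Union>i\<in>I. V i k \<times> {i})"
    unfolding e using i by blast
  fix k assume "k < r"
  have "e \<inter> (\<Union>i\<in>I. V i k \<times> {i}) = (a \<inter> V i k) \<times> {i}"
    unfolding e using i by blast
  then show "card (e \<inter> (\<Union>i\<in>I. V i k \<times> {i})) = 1"
    using a_classes \<open>k < r\<close> by (simp add: card_cartesian_product)
qed

lemma r_partite_uniform_disjoint_union:
  assumes "\<forall>i\<in>I. r_partite_uniform r (H i)"
  shows "r_partite_uniform r (disjoint_union H I)"
proof -
  obtain V where "\<forall>i\<in>I. partite_classes r (H i) (V i)"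
    using assms bchoice unfolding r_partite_uniform_iff_partite_classes by metis
  then show ?thesis
    unfolding r_partite_uniform_iff_partite_classes by (blast intro: partite_classes_disjoint_union)
qed

lemma matching_disjoint_union:
  assumes "\<forall>i\<in>I. matching (M i)"
  shows "matching (disjoint_union M I)"
  using assms unfolding matching_def disjoint_union_def by (auto simp: times_eq_iff)

text \<open>Empty edges must be excluded: \<open>{} \<times> {i} = {}\<close> for every \<open>i\<close>, so the copies of
  \<open>{}\<close> coincide.\<close>

lemma card_disjoint_union:
  assumes "finite I" and "\<forall>i\<in>I. finite (M i) \<and> {} \<notin> M i"
  shows "card (disjoint_union M I) = (\<Sum>i\<in>I. card (M i))"
proof -
  have "card (disjoint_union M I) = (\<Sum>i\<in>I. card ((\<lambda>e. e \<times> {i}) ` M i))"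
    unfolding disjoint_union_def
    using assms by (intro card_UN_disjoint) (auto simp: times_eq_iff)
  also have "\<dots> = (\<Sum>i\<in>I. card (M i))"
    by (simp add: card_image inj_on_subset[OF inj_Times_singleton])
  finally show ?thesis .
qed

lemma matching_collection_disjoint_union:
  assumes "finite I"
    and "\<forall>i\<in>I. matching_collection (H i) n (Ms i) (t i) \<and> {} \<notin> H i"
  shows "matching_collection (disjoint_union H I) n
           (\<lambda>j. disjoint_union (\<lambda>i. Ms i j) I) (\<Sum>i\<in>I. t i)"
  unfolding matching_collection_def
proof (intro allI impI conjI)
  fix j assume "j < n"
  then have Ms: "\<forall>i\<in>I. Ms i j \<subseteq> H i \<and> matching (Ms i j) \<and> finite (Ms i j) \<and>
      card (Ms i j) = t i \<and> {} \<notin> Ms i j"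
    using assms(2) unfolding matching_collection_def by blast
  show "disjoint_union (\<lambda>i. Ms i j) I \<subseteq> disjoint_union H I"
    using Ms unfolding disjoint_union_def by blast
  show "matching (disjoint_union (\<lambda>i. Ms i j) I)"
    using Ms by (intro matching_disjoint_union) blast
  show "finite (disjoint_union (\<lambda>i. Ms i j) I)"
    using Ms \<open>finite I\<close> unfolding disjoint_union_def by blast
  show "card (disjoint_union (\<lambda>i. Ms i j) I) = (\<Sum>i\<in>I. t i)"
    using Ms \<open>finite I\<close> by (simp add: card_disjoint_union)
qed

lemma rainbow_matching_subset:
  assumes "rainbow_matching n Ms M" and "N \<subseteq> M"
  shows "rainbow_matching n Ms N"
  using assms unfolding rainbow_matching_def matching_def
  by (meson inj_on_subset subsetD order_trans)

lemma has_rainbow_matching_of_size_if_le_card: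
  assumes "rainbow_matching n Ms M" and "finite M" and "s \<le> card M"
  shows "has_rainbow_matching_of_size n Ms s"
proof -
  obtain N where "N \<subseteq> M" "card N = s"
    using obtain_subset_with_card_n[OF assms(3)] by blast
  then show ?thesis
    unfolding has_rainbow_matching_of_size_def
    using rainbow_matching_subset[OF assms(1)] finite_subset assms(2) by blast
qed

lemma rainbow_matching_restrict_disjoint_union:
  assumes "rainbow_matching n (\<lambda>j. disjoint_union (\<lambda>i. Ms i j) I) M"
    and "i \<in> I" and "\<forall>i\<in>I. \<forall>j<n. {} \<notin> Ms i j"
  shows "rainbow_matching n (Ms i) {a. a \<times> {i} \<in> M}"
proof -
  obtain \<phi> where "inj_on \<phi> M"
    and \<phi>: "\<forall>e\<in>M. \<phi> e < n \<and> e \<in> disjoint_union (\<lambda>i. Ms i (\<phi> e)) I"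
    using assms(1) unfolding rainbow_matching_def by blast
  have copy_in: "\<phi> (a \<times> {i}) < n \<and> a \<in> Ms i (\<phi> (a \<times> {i}))" if "a \<times> {i} \<in> M" for a
    using \<phi> that assms(3) unfolding disjoint_union_def by (fastforce simp: times_eq_iff)
  have "inj_on (\<lambda>a. \<phi> (a \<times> {i})) {a. a \<times> {i} \<in> M}"
    using \<open>inj_on \<phi> M\<close> inj_Times_singleton
    by (auto intro!: inj_onI dest: inj_onD injD)
  moreover have "matching {a. a \<times> {i} \<in> M}"
    using assms(1) unfolding rainbow_matching_def matching_def
    by (fastforce simp: Times_Int_Times)
  ultimately show ?thesis
    unfolding rainbow_matching_def using copy_in by blast
qed

lemma card_le_sum_card_copies:
  assumes "finite M" and "finite I" and "M \<subseteq> (\<Union>i\<in>I. range (\<lambda>a. a \<times> {i}))"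
  shows "card M \<le> (\<Sum>i\<in>I. card {a. a \<times> {i} \<in> M})"
proof -
  have finite_copies: "finite {a. a \<times> {i} \<in> M}" for i
    using finite_vimageI[OF assms(1) inj_Times_singleton] by (simp add: vimage_def)
  have "card M \<le> card (\<Union>i\<in>I. (\<lambda>a. a \<times> {i}) ` {a. a \<times> {i} \<in> M})"
    using assms finite_copies by (intro card_mono) blast+
  also have "\<dots> \<le> (\<Sum>i\<in>I. card ((\<lambda>a. a \<times> {i}) ` {a. a \<times> {i} \<in> M}))"
    using assms(2) by (rule card_UN_le)
  also have "\<dots> \<le> (\<Sum>i\<in>I. card {a. a \<times> {i} \<in> M})"
    by (intro sum_mono card_image_le finite_copies)
  finally show ?thesis .
qed

lemma sum_pigeonhole_nat:
  fixes c t :: "'i \<Rightarrow> nat"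
  assumes "finite I" and "I \<noteq> {}" and "(\<Sum>i\<in>I. t i) + 1 - card I \<le> (\<Sum>i\<in>I. c i)"
  shows "\<exists>i\<in>I. t i \<le> c i"
proof (rule ccontr)
  assume "\<not> ?thesis"
  then have "(\<Sum>i\<in>I. Suc (c i)) \<le> (\<Sum>i\<in>I. t i)"
    by (intro sum_mono) auto
  moreover have "card I > 0"
    using assms(1,2) by (simp add: card_gt_0_iff)
  ultimately show False
    using assms(3) by (simp add: sum_Suc)
qed

lemma not_has_rainbow_matching_disjoint_union:
  assumes "finite I" and "I \<noteq> {}" and "\<forall>i\<in>I. \<forall>j<n. {} \<notin> Ms i j"
    and "\<forall>i\<in>I. \<not> has_rainbow_matching_of_size n (Ms i) (t i)"
  shows "\<not> has_rainbow_matching_of_size n (\<lambda>j. disjoint_union (\<lambda>i. Ms i j) I)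
           ((\<Sum>i\<in>I. t i) + 1 - card I)"
proof
  assume "has_rainbow_matching_of_size n (\<lambda>j. disjoint_union (\<lambda>i. Ms i j) I)
           ((\<Sum>i\<in>I. t i) + 1 - card I)"
  then obtain M where rainbow: "rainbow_matching n (\<lambda>j. disjoint_union (\<lambda>i. Ms i j) I) M"
    and "finite M" and card_M: "card M = (\<Sum>i\<in>I. t i) + 1 - card I"
    unfolding has_rainbow_matching_of_size_def by blast
  have "M \<subseteq> (\<Union>j<n. disjoint_union (\<lambda>i. Ms i j) I)"
    using rainbow unfolding rainbow_matching_def by simp
  also have "\<dots> \<subseteq> (\<Union>i\<in>I. range (\<lambda>a. a \<times> {i}))"
    unfolding disjoint_union_def by blast
  finally have "(\<Sum>i\<in>I. t i) + 1 - card I \<le> (\<Sum>i\<in>I. card {a. a \<times> {i} \<in> M})"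
    using card_le_sum_card_copies[OF \<open>finite M\<close> \<open>finite I\<close>] card_M by simp
  then obtain i where "i \<in> I" and large: "t i \<le> card {a. a \<times> {i} \<in> M}"
    using sum_pigeonhole_nat[OF \<open>finite I\<close> \<open>I \<noteq> {}\<close>] by blast
  have "finite {a. a \<times> {i} \<in> M}"
    using finite_vimageI[OF \<open>finite M\<close> inj_Times_singleton] by (simp add: vimage_def)
  then have "has_rainbow_matching_of_size n (Ms i) (t i)"
    using has_rainbow_matching_of_size_if_le_card large
      rainbow_matching_restrict_disjoint_union[OF rainbow \<open>i \<in> I\<close> assms(3)] by blast
  then show False
    using assms(4) \<open>i \<in> I\<close> by blast
qed

theorem lemma2p4:
  fixes r n q :: nat and t :: "nat \<Rightarrow> nat"
  assumes "r > 0" and "n > 0" and "q > 0"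
    and "\<forall>i<q. t i > 0"
    and "\<forall>i<q. \<exists>(Hi :: 'v set set) Ms.
           r_partite_uniform r Hi \<and> matching_collection Hi n Ms (t i) \<and>
           \<not> has_rainbow_matching_of_size n Ms (t i)"
  shows "\<exists>(H :: ('v \<times> nat) set set) Ms.
           r_partite_uniform r H \<and> matching_collection H n Ms (\<Sum>i<q. t i) \<and>
           \<not> has_rainbow_matching_of_size n Ms ((\<Sum>i<q. t i) + 1 - q)"
proof -
  obtain H :: "nat \<Rightarrow> 'v set set" and Ms where
    H: "\<forall>i<q. r_partite_uniform r (H i) \<and> matching_collection (H i) n (Ms i) (t i) \<and>
          \<not> has_rainbow_matching_of_size n (Ms i) (t i)"
    using assms(5) by metis
  have nonempty: "\<forall>i<q. {} \<notin> H i"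
    using H r_partite_uniform_edge_nonempty \<open>r > 0\<close> by blast
  then have "\<forall>i<q. \<forall>j<n. {} \<notin> Ms i j"
    using H unfolding matching_collection_def by blast
  then have "\<not> has_rainbow_matching_of_size n (\<lambda>j. disjoint_union (\<lambda>i. Ms i j) {..<q})
               ((\<Sum>i<q. t i) + 1 - q)"
    using not_has_rainbow_matching_disjoint_union[of "{..<q}" n Ms t] H \<open>q > 0\<close>
    by (simp add: lessThan_empty_iff)
  moreover have "r_partite_uniform r (disjoint_union H {..<q})"
    using H by (simp add: r_partite_uniform_disjoint_union)
  moreover have "matching_collection (disjoint_union H {..<q}) n
                   (\<lambda>j. disjoint_union (\<lambda>i. Ms i j) {..<q}) (\<Sum>i<q. t i)"
    using H nonempty by (simp add: matching_collection_disjoint_union)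
  ultimately show ?thesis
    by blast
qed

end
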